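(* Let $F$ be a field, $A\in\mathrm{gl}(m,F)$, $\rho$ a permutation of $\Omega_n$, and $\pi$ a permutation of $\Omega_{mn}$ such that $\operatorname{supp}P_\pi\subseteq\operatorname{supp}(A\,\dot\times\,P_\rho)$. Then there exist permutations $\lambda_0,\dots,\lambda_{n-1}$ of $\Omega_m$ such that $\pi(jn+s)=\lambda_s(j)\,n+\rho(s)$ for all $j\in\Omega_m$, $s\in\Omega_n$, and $\operatorname{supp}P_{\lambda_s}\subseteq\operatorname{supp}A$ for all $s\in\Omega_n$.
   Context: $\Omega_n=\{0,1,\dots,n-1\}$ indexes rows and columns; $\mathrm{gl}(m,F)$ is the space of $m\times m$ matrices over $F$. For a permutation $\pi$ of $\Omega_n$, $P_\pi$ is the matrix with $(i,j)$ entry $1$ if $i=\pi(j)$ and $0$ otherwise. For $A=[a_{i,j}]$, $\operatorname{supp}A=\{(i,j): a_{i,j}\neq 0\}$. For $A=[a_{i,j}]_{i,j\in\Omega_m}$ and $B=[b_{r,s}]_{r,s\in\Omega_n}$, the Kronecker product $A\,\dot\times\,B$ is the $mn\times mn$ matrix whose $(in+r,\,jn+s)$ entry is $a_{i,j}b_{r,s}$. *)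

theory Defs
  imports Main "HOL-Combinatorics.Permutations"
begin

text \<open>Matrices over a field indexed by naturals; an m x m matrix is a function
  nat => nat => 'a of which only the entries with indices in {..<m} matter.\<close>

definition perm_mat :: "(nat \<Rightarrow> nat) \<Rightarrow> nat \<Rightarrow> nat \<Rightarrow> 'a::zero_neq_one" where
  "perm_mat \<pi> i j = (if i = \<pi> j then 1 else 0)"

definition supp :: "nat \<Rightarrow> (nat \<Rightarrow> nat \<Rightarrow> 'a::zero) \<Rightarrow> (nat \<times> nat) set" where
  "supp m A = {(i, j). i < m \<and> j < m \<and> A i j \<noteq> 0}"

definition kron :: "nat \<Rightarrow> (nat \<Rightarrow> nat \<Rightarrow> 'a::times) \<Rightarrow> (nat \<Rightarrow> nat \<Rightarrow> 'a) \<Rightarrow> nat \<Rightarrow> nat \<Rightarrow> 'a" where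
  "kron n A B a b = A (a div n) (b div n) * B (a mod n) (b mod n)"

end

theory Submission
  imports Defs
begin

text \<open>Index \<open>b = j * n + s\<close> by its block row \<open>j = b div n\<close> and its position \<open>s = b mod n\<close>
  inside the block. Every nonzero entry of \<open>P\<^sub>\<pi>\<close> must be a nonzero entry of \<open>A \<otimes> P\<^sub>\<rho>\<close>, so
  \<open>\<pi>(j n + s) mod n = \<rho> s\<close> and \<open>A (\<pi>(j n + s) div n) j \<noteq> 0\<close>. For fixed \<open>s\<close> all the
  images \<open>\<pi>(j n + s)\<close> therefore share their position \<open>\<rho> s\<close>, so their block rows
  \<open>\<lambda>\<^sub>s j = \<pi>(j n + s) div n\<close> are pairwise distinct by injectivity of \<open>\<pi>\<close>, and \<open>\<lambda>\<^sub>s\<close> is a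
  permutation of \<open>\<Omega>\<^sub>m\<close>.\<close>

lemma mult_add_less_mult:
  fixes j s m n :: nat
  assumes "j < m" "s < n"
  shows "j * n + s < m * n"
proof -
  have "j * n + s < Suc j * n" using assms(2) by simp
  also have "\<dots> \<le> m * n" using assms(1) by (intro mult_le_mono1) simp
  finally show ?thesis .
qed

lemma mem_supp_perm_mat_iff:
  "(i, j) \<in> supp m (perm_mat \<pi> :: nat \<Rightarrow> nat \<Rightarrow> 'a::zero_neq_one) \<longleftrightarrow> i < m \<and> j < m \<and> i = \<pi> j"
  by (simp add: supp_def perm_mat_def)

lemma supp_perm_mat_subset_supp_kron:
  fixes A B :: "nat \<Rightarrow> nat \<Rightarrow> 'a::{zero_neq_one, mult_zero}"
  assumes "supp (m * n) (perm_mat \<pi> :: nat \<Rightarrow> nat \<Rightarrow> 'a) \<subseteq> supp (m * n) (kron n A B)"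
    and "b < m * n" "\<pi> b < m * n"
  shows "A (\<pi> b div n) (b div n) \<noteq> 0" "B (\<pi> b mod n) (b mod n) \<noteq> 0"
proof -
  have "(\<pi> b, b) \<in> supp (m * n) (perm_mat \<pi> :: nat \<Rightarrow> nat \<Rightarrow> 'a)"
    using assms(2,3) by (simp add: mem_supp_perm_mat_iff)
  with assms(1) have "A (\<pi> b div n) (b div n) * B (\<pi> b mod n) (b mod n) \<noteq> 0"
    by (auto simp: supp_def kron_def)
  then show "A (\<pi> b div n) (b div n) \<noteq> 0" "B (\<pi> b mod n) (b mod n) \<noteq> 0"
    by auto
qed

definition block_perm :: "nat \<Rightarrow> nat \<Rightarrow> (nat \<Rightarrow> nat) \<Rightarrow> nat \<Rightarrow> nat \<Rightarrow> nat" where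
  "block_perm m n \<pi> s j = (if j < m then \<pi> (j * n + s) div n else j)"

lemma block_perm_mult_add_mod:
  "j < m \<Longrightarrow> \<pi> (j * n + s) = block_perm m n \<pi> s j * n + \<pi> (j * n + s) mod n"
  by (simp add: block_perm_def)

lemma block_perm_permutes:
  assumes \<pi>: "\<pi> permutes {..<m * n}" and "s < n"
    and same_pos: "\<And>j. j < m \<Longrightarrow> \<pi> (j * n + s) mod n = r"
  shows "block_perm m n \<pi> s permutes {..<m}"
proof (rule inj_imp_permutes)
  have pos: "\<pi> (j * n + s) = block_perm m n \<pi> s j * n + r" if "j < m" for j
    using block_perm_mult_add_mod[OF that, of \<pi> n s] same_pos[OF that] by linarith
  show "inj_on (block_perm m n \<pi> s) {..<m}"
  proof (rule inj_onI)
    fix j j' assume "j \<in> {..<m}" "j' \<in> {..<m}" "block_perm m n \<pi> s j = block_perm m n \<pi> s j'"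
    then have "\<pi> (j * n + s) = \<pi> (j' * n + s)" by (simp add: pos)
    then have "j * n + s = j' * n + s" using permutes_inj[OF \<pi>] by (auto dest: injD)
    then show "j = j'" using \<open>s < n\<close> by simp
  qed
  show "block_perm m n \<pi> s j \<in> {..<m}" if "j \<in> {..<m}" for j
  proof -
    have "\<pi> (j * n + s) < m * n"
      using permutes_in_image[OF \<pi>] mult_add_less_mult that \<open>s < n\<close> by simp
    then show ?thesis using that by (simp add: block_perm_def less_mult_imp_div_less)
  qed
qed (simp_all add: block_perm_def)

theorem theorem3p3:
  fixes A :: "nat \<Rightarrow> nat \<Rightarrow> 'a::field"
    and m n :: nat and \<rho> \<pi> :: "nat \<Rightarrow> nat"
  assumes "\<rho> permutes {..<n}"
    and "\<pi> permutes {..<m * n}"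
    and "supp (m * n) (perm_mat \<pi> :: nat \<Rightarrow> nat \<Rightarrow> 'a) \<subseteq> supp (m * n) (kron n A (perm_mat \<rho>))"
  shows "\<exists>lam :: nat \<Rightarrow> nat \<Rightarrow> nat.
           (\<forall>s<n. lam s permutes {..<m}) \<and>
           (\<forall>j<m. \<forall>s<n. \<pi> (j * n + s) = lam s j * n + \<rho> s) \<and>
           (\<forall>s<n. supp m (perm_mat (lam s) :: nat \<Rightarrow> nat \<Rightarrow> 'a) \<subseteq> supp m A)"
proof -
  have entry: "A (block_perm m n \<pi> s j) j \<noteq> 0 \<and> \<pi> (j * n + s) mod n = \<rho> s"
    if "j < m" "s < n" for j s
  proof -
    have b: "j * n + s < m * n" using mult_add_less_mult that .
    then have "\<pi> (j * n + s) < m * n" using permutes_in_image[OF assms(2)] by simp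
    from supp_perm_mat_subset_supp_kron[OF assms(3) b this] that show ?thesis
      by (simp add: block_perm_def perm_mat_def split: if_splits)
  qed
  have "block_perm m n \<pi> s permutes {..<m}" if "s < n" for s
    using block_perm_permutes[OF assms(2) that] entry that by blast
  moreover have "\<pi> (j * n + s) = block_perm m n \<pi> s j * n + \<rho> s" if "j < m" "s < n" for j s
    using block_perm_mult_add_mod[OF that(1), of \<pi> n s] entry[OF that] by linarith
  moreover have "supp m (perm_mat (block_perm m n \<pi> s) :: nat \<Rightarrow> nat \<Rightarrow> 'a) \<subseteq> supp m A"
    if "s < n" for s
    using entry that by (auto simp: supp_def perm_mat_def)
  ultimately show ?thesis by blast
qed

end
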